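(* Let $\rho$ be a set function on subsets of $\{1,\ldots,r\}$ that is subadditive, monotone increasing, and satisfies $\rho(I)=0$ iff $I=\emptyset$, and let $\lambda_\rho=\min\{\lceil\max_S\rho(S)/\min_{S\neq\emptyset}\rho(S)\rceil,\ r\}$. For any collection $\mathcal A$ of nonempty subsets of $\{1,\ldots,r\}$, there exists a subcollection $\widehat{\mathcal A}\subseteq\mathcal A$ of size at most $\lambda_\rho$ such that $\rho\big(\bigcup_{A\in\mathcal A}A\big)\le\sum_{A\in\widehat{\mathcal A}}\rho(A)$.
   Context: Subadditive means $\rho(A\cup B)\le\rho(A)+\rho(B)$ for all sets $A,B$. *)

theory Defs
  imports Complex_Main
begin

definition subadditive_on :: "nat \<Rightarrow> (nat set \<Rightarrow> real) \<Rightarrow> bool" where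
  "subadditive_on r \<rho> \<longleftrightarrow>
     (\<forall>A B. A \<subseteq> {1..r} \<longrightarrow> B \<subseteq> {1..r} \<longrightarrow> \<rho> (A \<union> B) \<le> \<rho> A + \<rho> B)"

definition monotone_on_sets :: "nat \<Rightarrow> (nat set \<Rightarrow> real) \<Rightarrow> bool" where
  "monotone_on_sets r \<rho> \<longleftrightarrow>
     (\<forall>A B. A \<subseteq> B \<longrightarrow> B \<subseteq> {1..r} \<longrightarrow> \<rho> A \<le> \<rho> B)"

definition lambda_rho :: "nat \<Rightarrow> (nat set \<Rightarrow> real) \<Rightarrow> nat" where
  "lambda_rho r \<rho> =
     min (nat \<lceil>Max (\<rho> ` Pow {1..r}) / Min (\<rho> ` (Pow {1..r} - {{}}))\<rceil>) r"

end

theory Submission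
  imports Defs
begin

text \<open>Choosing, for every point of the union, one member of the family that contains it
  gives a subfamily with the same union and at most \<open>r\<close> members; by subadditivity its
  sum bounds \<open>\<rho>\<close> of the union. If it has more than \<open>k = \<lceil>max \<rho> / min \<rho>\<rceil>\<close> members,
  any \<open>k\<close> of them already have sum at least \<open>k \<cdot> min \<rho> \<ge> max \<rho>\<close>.\<close>

lemma subadditive_on_Union:
  assumes "subadditive_on r \<rho>" "\<rho> {} = 0" "finite F" "\<forall>A\<in>F. A \<subseteq> {1..r}"
  shows "\<rho> (\<Union>F) \<le> (\<Sum>A\<in>F. \<rho> A)"
  using assms(3,4)
proof (induction F rule: finite_induct)
  case empty
  then show ?case using assms(2) by simp
next
  case (insert A F)
  have "\<rho> (\<Union>(insert A F)) \<le> \<rho> A + \<rho> (\<Union>F)"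
    using assms(1) insert.prems unfolding subadditive_on_def by (simp add: Union_least)
  also have "\<dots> \<le> \<rho> A + (\<Sum>B\<in>F. \<rho> B)" using insert by simp
  finally show ?case using insert by simp
qed

lemma monotone_on_sets_nonneg:
  assumes "monotone_on_sets r \<rho>" "\<rho> {} = 0" "A \<subseteq> {1..r}"
  shows "0 \<le> \<rho> A"
  using assms unfolding monotone_on_sets_def by (metis empty_subsetI)

lemma subfamily_same_Union_card_le:
  assumes "finite (\<Union>\<A>)"
  obtains \<B> where "\<B> \<subseteq> \<A>" "finite \<B>" "card \<B> \<le> card (\<Union>\<A>)" "\<Union>\<B> = \<Union>\<A>"
proof
  define pick where "pick x = (SOME A. A \<in> \<A> \<and> x \<in> A)" for x
  have pick: "pick x \<in> \<A> \<and> x \<in> pick x" if "x \<in> \<Union>\<A>" for x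
    unfolding pick_def using that someI_ex[of "\<lambda>A. A \<in> \<A> \<and> x \<in> A"] by blast
  show "pick ` \<Union>\<A> \<subseteq> \<A>" "finite (pick ` \<Union>\<A>)" "card (pick ` \<Union>\<A>) \<le> card (\<Union>\<A>)"
    using pick assms by (auto intro: card_image_le)
  show "\<Union>(pick ` \<Union>\<A>) = \<Union>\<A>" using pick by blast
qed

lemma le_sum_if_card_eq_ceiling_div:
  fixes f :: "'a \<Rightarrow> real"
  assumes "card F = nat \<lceil>M / m\<rceil>" "0 < m" "\<forall>x\<in>F. m \<le> f x"
  shows "M \<le> sum f F"
proof -
  have "M \<le> real (nat \<lceil>M / m\<rceil>) * m"
    using real_nat_ceiling_ge[of "M / m"] assms(2) by (simp add: divide_le_eq)
  also have "\<dots> = (\<Sum>x\<in>F. m)" using assms(1) by simp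
  also have "\<dots> \<le> sum f F" using assms(3) by (intro sum_mono) blast
  finally show ?thesis .
qed

lemma Min_nonempty_subsets_pos:
  assumes "monotone_on_sets r \<rho>" "\<forall>I. I \<subseteq> {1..r} \<longrightarrow> (\<rho> I = 0 \<longleftrightarrow> I = {})" "1 \<le> r"
  shows "0 < Min (\<rho> ` (Pow {1..r} - {{}}))"
proof -
  have "{1} \<in> Pow {1..r} - {{}}" using assms(3) by auto
  then have "Min (\<rho> ` (Pow {1..r} - {{}})) \<in> \<rho> ` (Pow {1..r} - {{}})"
    by (intro Min_in) auto
  then obtain C where C: "C \<subseteq> {1..r}" "C \<noteq> {}" "Min (\<rho> ` (Pow {1..r} - {{}})) = \<rho> C"
    by auto
  have "0 \<le> \<rho> C" using monotone_on_sets_nonneg[OF assms(1) _ C(1)] assms(2) by simp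
  moreover have "\<rho> C \<noteq> 0" using assms(2) C by blast
  ultimately show ?thesis using C(3) by simp
qed

theorem proposition6p6:
  fixes r :: nat and \<rho> :: "nat set \<Rightarrow> real" and \<A> :: "nat set set"
  assumes "subadditive_on r \<rho>"
    and "monotone_on_sets r \<rho>"
    and "\<forall>I. I \<subseteq> {1..r} \<longrightarrow> (\<rho> I = 0 \<longleftrightarrow> I = {})"
    and "\<forall>A\<in>\<A>. A \<noteq> {} \<and> A \<subseteq> {1..r}"
  shows "\<exists>\<A>'. \<A>' \<subseteq> \<A> \<and> card \<A>' \<le> lambda_rho r \<rho> \<and>
           \<rho> (\<Union>\<A>) \<le> (\<Sum>A\<in>\<A>'. \<rho> A)"
proof -
  define M where "M = Max (\<rho> ` Pow {1..r})"
  define m where "m = Min (\<rho> ` (Pow {1..r} - {{}}))"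
  define k where "k = nat \<lceil>M / m\<rceil>"
  have lambda: "lambda_rho r \<rho> = min k r" unfolding lambda_rho_def k_def M_def m_def ..
  have Union_sub: "\<Union>\<A> \<subseteq> {1..r}" using assms(4) by blast
  then have "finite (\<Union>\<A>)" "card (\<Union>\<A>) \<le> r"
    using finite_subset card_mono[of "{1..r}"] by fastforce+
  then obtain \<B> where \<B>: "\<B> \<subseteq> \<A>" "finite \<B>" "card \<B> \<le> r" "\<Union>\<B> = \<Union>\<A>"
    using subfamily_same_Union_card_le[of \<A>] le_trans by metis
  show ?thesis
  proof (cases "card \<B> \<le> k")
    case True
    moreover have "\<rho> (\<Union>\<B>) \<le> (\<Sum>A\<in>\<B>. \<rho> A)"
      using \<B> assms by (intro subadditive_on_Union) auto
    ultimately show ?thesis using \<B> lambda by (intro exI[of _ \<B>]) auto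
  next
    case False
    then obtain \<C> where \<C>: "\<C> \<subseteq> \<B>" "card \<C> = k"
      by (metis nat_le_linear obtain_subset_with_card_n)
    obtain A where "A \<in> \<A>" using False \<B>(1) by fastforce
    then have "1 \<le> r" using assms(4) by fastforce
    with assms(2,3) have "0 < m" unfolding m_def by (rule Min_nonempty_subsets_pos)
    moreover have "\<forall>A\<in>\<C>. m \<le> \<rho> A"
      unfolding m_def using \<C>(1) \<B>(1) assms(4) by (auto intro: Min_le)
    ultimately have "M \<le> (\<Sum>A\<in>\<C>. \<rho> A)"
      using \<C>(2) unfolding k_def by (intro le_sum_if_card_eq_ceiling_div)
    moreover have "\<rho> (\<Union>\<A>) \<le> M" unfolding M_def using Union_sub by (intro Max_ge) auto
    ultimately show ?thesis
      using \<C> \<B> False lambda by (intro exI[of _ \<C>]) auto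
  qed
qed

end
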